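(* Let $U$ be a countably infinite universe, $\mathcal{C}=(L_1,L_2,\ldots)$ a countably infinite collection of languages over $U$, let $m^\star(L_i)$ and the orderings $\mathcal{C}'_i$ be as computed by the Procedure described in the context, and fix a non-decreasing $f:\mathbb{N}\to\mathbb{N}$ with $\lim_{t\to\infty}f(t)=\infty$. Then the Algorithm described in the context (with this $f$) non-uniformly generates from $\mathcal{C}$ with generation time $t^\star(L_i)=\max(g(i),m^\star(L_i)+1)$ for every $i$, where $g(i)$ is the smallest $j$ with $f(j)\ge i$; that is, for every $i$, every enumeration of $L_i$, and every $t$ with $|S_t|\ge t^\star(L_i)$, the output $z_t$ belongs to $L_i\setminus S_t$.
   Context: A language is an infinite subset of $U$. A collection is a sequence of languages; repetitions are allowed and entries are distinguished by their index. An enumeration of a language $L$ is a sequence $x_1,x_2,\ldots$ with every $x_t\in L$ and every $x\in L$ equal to some $x_t$. A generating algorithm at each time $t\ge1$ receives $x_1,\ldots,x_t$ and outputs $z_t\in U$; $S_t$ is the set of distinct strings among $x_1,\ldots,x_t$. An algorithm non-uniformly generates from $\mathcal{C}$ with generation times $t(L_i)$ if for every $i$ and every enumeration of $L_i$, $z_t\in L_i\setminus S_t$ whenever $|S_t|\ge t(L_i)$. Procedure. Set $\mathcal{C}'_0=()$. For $i=1,2,3,\ldots$: append the entry $L_i$ at the end of $\mathcal{C}'_{i-1}$ to get $\mathcal{C}'_i=(L'_1,\ldots,L'_i)$ (a permutation of the entries $L_1,\ldots,L_i$), and set $j=i$. Repeat: (1) among all subcollections $\mathcal{D}$ of the entries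 $(L'_1,\ldots,L'_j)$ that include the entry $L'_j$ and satisfy $|\bigcap_{L\in\mathcal{D}}L|<\infty$, let $\mathcal{C}_{\mathrm{chk}}$ be one maximizing $|\bigcap_{L\in\mathcal{D}}L|$ and $m_{\mathrm{chk}}$ this maximum; if no such $\mathcal{D}$ exists, set $\mathcal{C}_{\mathrm{chk}}=()$, $m_{\mathrm{chk}}=0$. (2) If $j\le1$ or $m_{\mathrm{chk}}>m^\star(L'_{j-1})$ (the entry $L'_{j-1}$ has original index $<i$, so its value $m^\star$ is already fixed), stop the loop. (3) Otherwise swap the entries at positions $j-1$ and $j$ in $\mathcal{C}'_i$, set $j\leftarrow j-1$ and return to (1). When the loop stops, set $\mathcal{C}(L_i)=\mathcal{C}_{\mathrm{chk}}$ and $m^\star(L_i)=m_{\mathrm{chk}}$ (these are attached to index $i$). Algorithm (with parameter $f$). At time $t$, run the first $f(t)$ iterations of the Procedure to obtain $\mathcal{C}'_{f(t)}=(L'_1,\ldots,L'_{f(t)})$. Initialize $I_t=()$ and for $j=1,\ldots,f(t)$ in order: if $S_t\subseteq L'_j$ and $|\bigcap_{L\in I_t\cup\{L'_j\}}L|=\infty$, append $L'_j$ to $I_t$. If $I_t$ is empty, output an arbitrary string of $U\setminus S_t$; otherwise output a string of $(\bigcap_{L\in I_t}L)\setminus S_t$. *)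

theory Defs
  imports Main "HOL-Library.Countable_Set"
begin

text \<open>A collection is L :: nat => 'a set, entries L 1, L 2, ... (index 0 unused).
  An ordering C'_i is represented as a list of original indices (position p, 1-based,
  holds the original index ord ! (p-1)).\<close>

definition inter_pos :: "(nat \<Rightarrow> 'a set) \<Rightarrow> nat list \<Rightarrow> nat set \<Rightarrow> 'a set" where
  "inter_pos L ord P = (\<Inter>k\<in>P. L (ord ! k))"

definition chk_sizes :: "(nat \<Rightarrow> 'a set) \<Rightarrow> nat list \<Rightarrow> nat \<Rightarrow> nat set" where
  "chk_sizes L ord j =
     {card (inter_pos L ord P) | P. P \<subseteq> {..<j} \<and> j - 1 \<in> P \<and> finite (inter_pos L ord P)}"

definition mchk :: "(nat \<Rightarrow> 'a set) \<Rightarrow> nat list \<Rightarrow> nat \<Rightarrow> nat" where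
  "mchk L ord j = (if chk_sizes L ord j = {} then 0 else Max (chk_sizes L ord j))"

text \<open>The loop (1)-(3): the new entry sits at position j (1-based). Returns the final
  ordering and m_chk at the stop.\<close>
function bubble :: "(nat \<Rightarrow> 'a set) \<Rightarrow> (nat \<Rightarrow> nat) \<Rightarrow> nat list \<Rightarrow> nat \<Rightarrow> nat list \<times> nat" where
  "bubble L ms ord j =
     (if j \<le> 1 \<or> mchk L ord j > ms (ord ! (j - 2)) then (ord, mchk L ord j)
      else bubble L ms (ord[j - 2 := ord ! (j - 1), j - 1 := ord ! (j - 2)]) (j - 1))"
  by pat_completeness auto
termination by (relation "measure (\<lambda>(L, ms, ord, j). j)") auto

text \<open>The first i iterations of the Procedure: ordering C'_i and the values m* (by
  original index).\<close>
fun proc :: "(nat \<Rightarrow> 'a set) \<Rightarrow> nat \<Rightarrow> nat list \<times> (nat \<Rightarrow> nat)" where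
  "proc L 0 = ([], (\<lambda>_. 0))"
| "proc L (Suc i) =
     (let (ord, ms) = proc L i;
          (ord', m) = bubble L ms (ord @ [Suc i]) (Suc i)
      in (ord', ms(Suc i := m)))"

definition order :: "(nat \<Rightarrow> 'a set) \<Rightarrow> nat \<Rightarrow> nat list" where
  "order L i = fst (proc L i)"

definition mstar :: "(nat \<Rightarrow> 'a set) \<Rightarrow> nat \<Rightarrow> nat" where
  "mstar L i = snd (proc L i) i"

fun build_I :: "(nat \<Rightarrow> 'a set) \<Rightarrow> 'a set \<Rightarrow> nat list \<Rightarrow> nat list \<Rightarrow> nat list" where
  "build_I L S [] I = I"
| "build_I L S (k # ks) I =
     build_I L S ks
       (if S \<subseteq> L k \<and> infinite (\<Inter>k'\<in>set (I @ [k]). L k') then I @ [k] else I)"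

text \<open>z is an admissible output of the Algorithm (parameter f) at time t, when the
  set of distinct strings seen so far is S.\<close>
definition alg_output :: "(nat \<Rightarrow> 'a set) \<Rightarrow> (nat \<Rightarrow> nat) \<Rightarrow> nat \<Rightarrow> 'a set \<Rightarrow> 'a \<Rightarrow> bool" where
  "alg_output L f t S z =
     (let I = build_I L S (order L (f t)) []
      in if I = [] then z \<notin> S else z \<in> (\<Inter>k\<in>set I. L k) - S)"

definition enumeration :: "'a set \<Rightarrow> (nat \<Rightarrow> 'a) \<Rightarrow> bool" where
  "enumeration A x = ((\<forall>t\<ge>1. x t \<in> A) \<and> (\<forall>a\<in>A. \<exists>t\<ge>1. x t = a))"

definition gtime :: "(nat \<Rightarrow> nat) \<Rightarrow> nat \<Rightarrow> nat" where
  "gtime f i = (LEAST j. j \<ge> 1 \<and> f j \<ge> i)"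

end

theory Submission
  imports Defs
begin

text \<open>
  The Procedure maintains an invariant on the current ordering: for every entry L, m*(L)
  bounds the size of every finite intersection of L with entries placed before it. The new
  entry satisfies it where the loop stops, by the definition of m_chk. An old entry L'
  gains the new entry L_i as a predecessor only when L_i is swapped past it, i.e. when
  m_chk <= m*(L'); since m_chk bounds every finite intersection of L_i with entries placed
  before it, the invariant survives.

  Once f(t) >= i, the entry L_i occurs in C'_f(t). The entries put into I_t before it all
  contain S_t, so their intersection with L_i contains S_t and has more than m*(L_i)
  elements; by the invariant it is infinite. Hence L_i is put into I_t, and the output
  lies in L_i - S_t.
\<close>

declare bubble.simps [simp del]

definition predecessors :: "nat list \<Rightarrow> nat \<Rightarrow> nat set" where
  "predecessors ord c = set (takeWhile (\<lambda>x. x \<noteq> c) ord)"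

definition prefix_Inter_bound :: "(nat \<Rightarrow> 'a set) \<Rightarrow> nat list \<Rightarrow> nat \<Rightarrow> nat \<Rightarrow> bool" where
  "prefix_Inter_bound L ord c m \<longleftrightarrow>
     (\<forall>K. c \<in> K \<longrightarrow> K \<subseteq> insert c (predecessors ord c) \<longrightarrow> finite (\<Inter>k\<in>K. L k) \<longrightarrow>
        card (\<Inter>k\<in>K. L k) \<le> m)"

lemma prefix_Inter_boundD:
  "prefix_Inter_bound L ord c m \<Longrightarrow> c \<in> K \<Longrightarrow> K \<subseteq> insert c (predecessors ord c) \<Longrightarrow>
    finite (\<Inter>k\<in>K. L k) \<Longrightarrow> card (\<Inter>k\<in>K. L k) \<le> m"
  unfolding prefix_Inter_bound_def by blast

lemma predecessors_append_Cons: "c \<notin> set us \<Longrightarrow> predecessors (us @ c # vs) c = set us"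
  unfolding predecessors_def by (subst takeWhile_append2) auto

lemma predecessors_snoc: "c \<in> set ord \<Longrightarrow> predecessors (ord @ [x]) c = predecessors ord c"
  unfolding predecessors_def by (simp add: takeWhile_append1)

lemma predecessors_swap:
  "c \<noteq> a \<Longrightarrow> c \<noteq> b \<Longrightarrow> predecessors (xs @ a # b # ys) c = predecessors (xs @ b # a # ys) c"
proof (cases "c \<in> set xs")
  case True
  then show ?thesis unfolding predecessors_def by (simp add: takeWhile_append1)
next
  case False
  then have "\<forall>x\<in>set xs. x \<noteq> c" by blast
  moreover assume "c \<noteq> a" "c \<noteq> b"
  ultimately show ?thesis unfolding predecessors_def by (auto simp: takeWhile_append2)
qed

lemma finite_chk_sizes: "finite (chk_sizes L ord j)"
proof -
  have "chk_sizes L ord j \<subseteq> (\<lambda>P. card (inter_pos L ord P)) ` Pow {..<j}"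
    unfolding chk_sizes_def by auto
  then show ?thesis by (rule finite_subset) simp
qed

lemma card_Inter_le_mchk:
  assumes "c \<in> K" "K \<subseteq> insert c (set us)" "finite (\<Inter>k\<in>K. L k)"
  shows "card (\<Inter>k\<in>K. L k) \<le> mchk L (us @ c # vs) (Suc (length us))"
proof -
  let ?ord = "us @ c # vs"
  define P where "P = {..<Suc (length us)} \<inter> (!) ?ord -` K"
  have "(!) ?ord ` {..<Suc (length us)} = insert c (set us)"
    using nth_image[of "Suc (length us)" ?ord] by (simp add: lessThan_atLeast0)
  moreover have "(!) ?ord ` P = (!) ?ord ` {..<Suc (length us)} \<inter> K"
    unfolding P_def by blast
  ultimately have "(!) ?ord ` P = K"
    using assms(1,2) by auto
  then have "inter_pos L ?ord P = (\<Inter>k\<in>K. L k)"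
    unfolding inter_pos_def by auto
  moreover have "length us \<in> P"
    unfolding P_def using assms(1) by simp
  ultimately have "card (\<Inter>k\<in>K. L k) \<in> chk_sizes L ?ord (Suc (length us))"
    unfolding chk_sizes_def using assms(3) by (intro CollectI exI[of _ P]) (auto simp: P_def)
  then show ?thesis
    unfolding mchk_def using finite_chk_sizes by (auto intro: Max_ge)
qed

lemma bubble_first: "bubble L ms (new # post) (Suc 0) = (new # post, mchk L (new # post) (Suc 0))"
  by (simp add: bubble.simps)

lemma bubble_stop:
  assumes "ms b < mchk L (pre @ b # new # post) (Suc (Suc (length pre)))"
  shows "bubble L ms (pre @ b # new # post) (Suc (Suc (length pre))) =
    (pre @ b # new # post, mchk L (pre @ b # new # post) (Suc (Suc (length pre))))"
  by (rule trans[OF bubble.simps]) (simp add: assms nth_append)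

lemma bubble_swap:
  assumes "\<not> ms b < mchk L (pre @ b # new # post) (Suc (Suc (length pre)))"
  shows "bubble L ms (pre @ b # new # post) (Suc (Suc (length pre))) =
    bubble L ms (pre @ new # b # post) (Suc (length pre))"
  by (rule trans[OF bubble.simps]) (simp add: assms nth_append list_update_append)

lemma bubble_inserts:
  assumes "bubble L ms (pre @ new # post) (Suc (length pre)) = (ord', m)"
  shows "\<exists>xs ys. pre = xs @ ys \<and> ord' = xs @ new # ys @ post"
  using assms
proof (induction pre arbitrary: post rule: rev_induct)
  case Nil
  then show ?case by (simp add: bubble_first)
next
  case (snoc b pre)
  show ?case
  proof (cases "ms b < mchk L (pre @ b # new # post) (Suc (Suc (length pre)))")
    case True
    then have "ord' = pre @ b # new # post"
      using snoc.prems by (simp add: bubble_stop)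
    then show ?thesis by (intro exI[of _ "pre @ [b]"] exI[of _ "[]"]) simp
  next
    case False
    then obtain xs ys where "pre = xs @ ys" "ord' = xs @ new # ys @ b # post"
      using snoc.IH[of "b # post"] snoc.prems by (auto simp: bubble_swap)
    then show ?thesis by (intro exI[of _ xs] exI[of _ "ys @ [b]"]) simp
  qed
qed

lemma prefix_Inter_bound_mchk:
  "c \<notin> set us \<Longrightarrow> prefix_Inter_bound L (us @ c # vs) c (mchk L (us @ c # vs) (Suc (length us)))"
  unfolding prefix_Inter_bound_def by (simp add: predecessors_append_Cons card_Inter_le_mchk)

lemma prefix_Inter_bound_swap_other:
  "c \<noteq> a \<Longrightarrow> c \<noteq> b \<Longrightarrow>
    prefix_Inter_bound L (xs @ a # b # ys) c m = prefix_Inter_bound L (xs @ b # a # ys) c m"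
  unfolding prefix_Inter_bound_def by (simp add: predecessors_swap)

lemma prefix_Inter_bound_overtaken:
  assumes "distinct (pre @ b # new # post)"
    and "prefix_Inter_bound L (pre @ b # new # post) b m"
    and "mchk L (pre @ b # new # post) (Suc (Suc (length pre))) \<le> m"
  shows "prefix_Inter_bound L (pre @ new # b # post) b m"
  unfolding prefix_Inter_bound_def
proof (intro allI impI)
  fix K assume K: "b \<in> K" "K \<subseteq> insert b (predecessors (pre @ new # b # post) b)"
    and fin: "finite (\<Inter>k\<in>K. L k)"
  have "predecessors (pre @ new # b # post) b = insert new (set pre)"
    using assms(1) predecessors_append_Cons[of b "pre @ [new]" post] by simp
  then have K_sub: "K \<subseteq> insert new (insert b (set pre))"
    using K(2) by auto
  show "card (\<Inter>k\<in>K. L k) \<le> m"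
  proof (cases "new \<in> K")
    case True
    then have "card (\<Inter>k\<in>K. L k) \<le> mchk L ((pre @ [b]) @ new # post) (Suc (length (pre @ [b])))"
      using K_sub fin by (intro card_Inter_le_mchk) auto
    then show ?thesis using assms(3) by simp
  next
    case False
    then have "K \<subseteq> insert b (predecessors (pre @ b # new # post) b)"
      using K_sub assms(1) by (auto simp: predecessors_append_Cons)
    then show ?thesis by (rule prefix_Inter_boundD[OF assms(2) K(1) _ fin])
  qed
qed

lemma prefix_Inter_bounds_at_stop:
  assumes "distinct (pre @ new # post)"
    and "\<forall>c\<in>set (pre @ post). prefix_Inter_bound L (pre @ new # post) c (ms c)"
  shows "\<forall>c\<in>set (pre @ new # post). prefix_Inter_bound L (pre @ new # post) c
    ((ms(new := mchk L (pre @ new # post) (Suc (length pre)))) c)"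
  using assms prefix_Inter_bound_mchk[of new pre L post] by auto

lemma bubble_prefix_Inter_bounds:
  assumes "distinct (pre @ new # post)"
    and "\<forall>c\<in>set (pre @ post). prefix_Inter_bound L (pre @ new # post) c (ms c)"
    and "bubble L ms (pre @ new # post) (Suc (length pre)) = (ord', m)"
  shows "\<forall>c\<in>set ord'. prefix_Inter_bound L ord' c ((ms(new := m)) c)"
  using assms
proof (induction pre arbitrary: post rule: rev_induct)
  case Nil
  then have "ord' = new # post" "m = mchk L (new # post) (Suc 0)"
    by (auto simp: bubble_first)
  then show ?case using Nil.prems(1,2) prefix_Inter_bounds_at_stop[of "[]" new post L ms] by simp
next
  case (snoc b pre)
  let ?ord = "pre @ b # new # post" and ?j = "Suc (Suc (length pre))"
  show ?case
  proof (cases "ms b < mchk L ?ord ?j")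
    case True
    then have "ord' = ?ord" "m = mchk L ?ord ?j"
      using snoc.prems(3) by (auto simp: bubble_stop)
    then show ?thesis
      using snoc.prems(1,2) prefix_Inter_bounds_at_stop[of "pre @ [b]" new post L ms] by simp
  next
    case False
    have "prefix_Inter_bound L (pre @ new # b # post) b (ms b)"
      using False snoc.prems(1,2) by (intro prefix_Inter_bound_overtaken) auto
    moreover have "prefix_Inter_bound L (pre @ new # b # post) c (ms c)"
      if "c \<in> set (pre @ post)" for c
      using that snoc.prems(1,2) prefix_Inter_bound_swap_other[of c b new L pre post] by auto
    ultimately show ?thesis
      using False snoc.prems snoc.IH[of "b # post"] by (simp add: bubble_swap)
  qed
qed

lemma proc_SucE:
  obtains ord ms ord' m where "proc L n = (ord, ms)"
    and "bubble L ms (ord @ [Suc n]) (Suc n) = (ord', m)"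
    and "proc L (Suc n) = (ord', ms(Suc n := m))"
proof -
  obtain ord ms where p: "proc L n = (ord, ms)" by fastforce
  obtain ord' m where b: "bubble L ms (ord @ [Suc n]) (Suc n) = (ord', m)" by fastforce
  show thesis by (rule that[OF p b]) (simp add: p b)
qed

lemma snd_proc_eq_mstar: "c \<le> n \<Longrightarrow> snd (proc L n) c = mstar L c"
proof (induction n)
  case 0
  then show ?case by (simp add: mstar_def)
next
  case (Suc n)
  obtain ord ms ord' m where "proc L n = (ord, ms)" "proc L (Suc n) = (ord', ms(Suc n := m))"
    by (rule proc_SucE)
  then show ?case using Suc by (cases "c = Suc n") (auto simp: mstar_def)
qed

lemma distinct_set_order: "distinct (order L n) \<and> set (order L n) = {1..n}"
proof (induction n)
  case 0
  then show ?case by (simp add: order_def)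
next
  case (Suc n)
  obtain ord ms ord' m where ord: "proc L n = (ord, ms)"
    and bub: "bubble L ms (ord @ [Suc n]) (Suc n) = (ord', m)"
    and ord': "proc L (Suc n) = (ord', ms(Suc n := m))"
    by (rule proc_SucE)
  have "distinct ord" and set_ord: "set ord = {1..n}"
    using Suc ord by (simp_all add: order_def)
  then have "length ord = n"
    using distinct_card by fastforce
  then obtain xs ys where "ord = xs @ ys" "ord' = xs @ Suc n # ys"
    using bubble_inserts[of L ms ord "Suc n" "[]"] bub by auto
  moreover have "Suc n \<notin> set ord"
    using set_ord by simp
  ultimately show ?case
    using \<open>distinct ord\<close> set_ord unfolding order_def ord' by auto
qed

lemma prefix_Inter_bounds_proc:
  "\<forall>c\<in>set (fst (proc L n)). prefix_Inter_bound L (fst (proc L n)) c (snd (proc L n) c)"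
proof (induction n)
  case 0
  then show ?case by simp
next
  case (Suc n)
  obtain ord ms ord' m where ord: "proc L n = (ord, ms)"
    and bub: "bubble L ms (ord @ [Suc n]) (Suc n) = (ord', m)"
    and ord': "proc L (Suc n) = (ord', ms(Suc n := m))"
    by (rule proc_SucE)
  have "length ord = n"
    using distinct_set_order[of L n] ord distinct_card by (fastforce simp: order_def)
  moreover have "distinct (ord @ [Suc n])"
    using distinct_set_order[of L n] ord by (simp add: order_def)
  moreover have "\<forall>c\<in>set ord. prefix_Inter_bound L (ord @ [Suc n]) c (ms c)"
    using Suc ord by (simp add: prefix_Inter_bound_def predecessors_snoc)
  ultimately show ?case
    using bubble_prefix_Inter_bounds[of ord "Suc n" "[]" L ms ord' m] bub ord' by simp
qed

lemma prefix_Inter_bound_order: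
  "c \<in> set (order L n) \<Longrightarrow> prefix_Inter_bound L (order L n) c (mstar L c)"
proof -
  assume c: "c \<in> set (order L n)"
  then have "snd (proc L n) c = mstar L c"
    using distinct_set_order[of L n] by (simp add: snd_proc_eq_mstar)
  then show ?thesis
    using c prefix_Inter_bounds_proc[of L n] unfolding order_def by metis
qed

lemma build_I_append: "build_I L S (xs @ ys) I = build_I L S ys (build_I L S xs I)"
  by (induction xs arbitrary: I) simp_all

lemma build_I_Cons_selected:
  "S \<subseteq> L k \<Longrightarrow> infinite (\<Inter>k'\<in>set (I @ [k]). L k') \<Longrightarrow>
    build_I L S (k # ks) I = build_I L S ks (I @ [k])"
  by (simp only: build_I.simps simp_thms if_True)

lemma build_I_Cons_cases:
  obtains "build_I L S (k # ks) I = build_I L S ks I"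
  | "S \<subseteq> L k" "build_I L S (k # ks) I = build_I L S ks (I @ [k])"
proof (cases "S \<subseteq> L k \<and> infinite (\<Inter>k'\<in>set (I @ [k]). L k')")
  case True
  then show thesis by (intro that(2)) (simp_all add: build_I_Cons_selected)
next
  case False
  then have "build_I L S (k # ks) I = build_I L S ks I"
    by (simp only: build_I.simps if_False)
  then show thesis by (rule that(1))
qed

(* With this equation active, simp rewrites hypotheses about build_I L S (k # ks) I into
   if-expressions and loops; case analysis goes through build_I_Cons_cases instead. *)
declare build_I.simps(2) [simp del]

lemma set_build_I_mono: "set I \<subseteq> set (build_I L S ks I)"
proof (induction ks arbitrary: I)
  case (Cons k ks)
  show ?case
  proof (cases rule: build_I_Cons_cases[of L S k ks I])
    case 1
    show ?thesis unfolding 1 using Cons.IH[of I] by simp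
  next
    case 2
    show ?thesis unfolding 2(2) using 2(1) Cons.IH[of "I @ [k]"] by auto
  qed
qed simp

lemma set_build_I_subset: "set (build_I L S ks I) \<subseteq> set I \<union> set ks"
proof (induction ks arbitrary: I)
  case (Cons k ks)
  show ?case
  proof (cases rule: build_I_Cons_cases[of L S k ks I])
    case 1
    show ?thesis unfolding 1 using Cons.IH[of I] by auto
  next
    case 2
    show ?thesis unfolding 2(2) using 2(1) Cons.IH[of "I @ [k]"] by auto
  qed
qed simp

lemma build_I_supersets: "set I \<subseteq> {k. S \<subseteq> L k} \<Longrightarrow> set (build_I L S ks I) \<subseteq> {k. S \<subseteq> L k}"
proof (induction ks arbitrary: I)
  case (Cons k ks)
  show ?case
  proof (cases rule: build_I_Cons_cases[of L S k ks I])
    case 1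
    show ?thesis unfolding 1 using Cons.prems by (rule Cons.IH)
  next
    case 2
    show ?thesis unfolding 2(2) using Cons.prems 2(1) by (intro Cons.IH) auto
  qed
qed simp

lemma mem_build_I:
  assumes "distinct ord" "i \<in> set ord" "S \<subseteq> L i"
    and "prefix_Inter_bound L ord i m" "m < card S"
  shows "i \<in> set (build_I L S ord [])"
proof -
  obtain us vs where ord: "ord = us @ i # vs"
    using assms(2) by (meson split_list)
  then have "i \<notin> set us"
    using assms(1) by simp
  define J where "J = build_I L S us []"
  let ?K = "set (J @ [i])"
  have "infinite (\<Inter>k\<in>?K. L k)"
  proof
    assume fin: "finite (\<Inter>k\<in>?K. L k)"
    have "set J \<subseteq> set us"
      using set_build_I_subset[of L S us "[]"] by (simp add: J_def)
    then have "?K \<subseteq> insert i (predecessors ord i)"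
      using \<open>i \<notin> set us\<close> by (auto simp: ord predecessors_append_Cons)
    have "S \<subseteq> (\<Inter>k\<in>?K. L k)"
      using assms(3) build_I_supersets[of "[]" S L us] by (auto simp: J_def)
    then have "card S \<le> card (\<Inter>k\<in>?K. L k)"
      using fin by (rule card_mono[rotated])
    also have "\<dots> \<le> m"
      using \<open>?K \<subseteq> insert i (predecessors ord i)\<close> assms(4) fin by (intro prefix_Inter_boundD) auto
    finally show False
      using assms(5) by simp
  qed
  then have "build_I L S ord [] = build_I L S vs (J @ [i])"
    using assms(3) by (simp add: ord build_I_append build_I_Cons_selected J_def)
  then show ?thesis
    using set_build_I_mono[of "J @ [i]" L S vs] by auto
qed

lemma le_f_if_gtime_le:
  assumes "mono f" "filterlim f at_top at_top" "gtime f i \<le> t"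
  shows "i \<le> f t"
proof -
  obtain N where "\<forall>n\<ge>N. i \<le> f n"
    using assms(2) by (auto simp: filterlim_at_top eventually_sequentially)
  then have "1 \<le> Suc N \<and> i \<le> f (Suc N)"
    by simp
  then have "1 \<le> gtime f i \<and> i \<le> f (gtime f i)"
    unfolding gtime_def by (rule LeastI)
  then have "i \<le> f (gtime f i)"
    by simp
  also have "\<dots> \<le> f t"
    using assms(1,3) by (rule monoD)
  finally show ?thesis .
qed

theorem mainTheorem2:
  fixes L :: "nat \<Rightarrow> 'a set" and f :: "nat \<Rightarrow> nat"
  assumes "countable (UNIV :: 'a set)" and "infinite (UNIV :: 'a set)"
    and "\<forall>i\<ge>1. infinite (L i)"
    and "mono f" and "filterlim f at_top at_top"
  shows "\<forall>i\<ge>1. \<forall>x. enumeration (L i) x \<longrightarrow>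
           (\<forall>t\<ge>1. card (x ` {1..t}) \<ge> max (gtime f i) (mstar L i + 1) \<longrightarrow>
              (\<forall>z. alg_output L f t (x ` {1..t}) z \<longrightarrow> z \<in> L i - x ` {1..t}))"
\<comment> \<open>The hypotheses on the universe and on the languages belong to the setting of the
  paper; correctness of the output only needs the growth of \<open>f\<close>.\<close>
proof (intro allI impI)
  fix i x t z
  assume "1 \<le> i" and enum: "enumeration (L i) x" and "1 \<le> t"
    and size: "max (gtime f i) (mstar L i + 1) \<le> card (x ` {1..t})"
    and out: "alg_output L f t (x ` {1..t}) z"
  let ?S = "x ` {1..t}" and ?ord = "order L (f t)"
  have "gtime f i \<le> t"
    using size card_image_le[of "{1..t}" x] by simp
  then have "i \<le> f t"
    using assms(4,5) by (rule le_f_if_gtime_le[rotated 2])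
  then have "i \<in> set ?ord"
    using distinct_set_order[of L "f t"] \<open>1 \<le> i\<close> by simp
  have "?S \<subseteq> L i"
    using enum by (auto simp: enumeration_def)
  moreover have "mstar L i < card ?S"
    using size by simp
  ultimately have I: "i \<in> set (build_I L ?S ?ord [])"
    using distinct_set_order[of L "f t"] prefix_Inter_bound_order[OF \<open>i \<in> set ?ord\<close>]
    by (intro mem_build_I[OF _ \<open>i \<in> set ?ord\<close>]) simp_all
  then have "build_I L ?S ?ord [] \<noteq> []"
    by auto
  then have "z \<in> (\<Inter>k\<in>set (build_I L ?S ?ord []). L k) - ?S"
    using out unfolding alg_output_def Let_def by simp
  then show "z \<in> L i - ?S"
    using I by blast
qed

end
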